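(* For $0\le p\le 1$ let $|\Psi_s\rangle=\cos\frac{\pi}{8}|000\rangle+\sin\frac{\pi}{8}|111\rangle$ and $$\rho_\chi(p,\pi/8)=p|\Psi_s\rangle\langle\Psi_s|+(1-p)\,|00\rangle\langle00|\otimes\tfrac{I_2}{2}.$$ Then the $3\times 9$ matrix $M$ with entries $M_{j,ik}=\mathrm{tr}[\rho_\chi(p,\pi/8)(\sigma_i\otimes\sigma_j\otimes\sigma_k)]$ has singular values $p,p,\frac{\sqrt2}{2}p$, and the maximal value of $|\mathrm{tr}(\mathcal{S}\rho_\chi(p,\pi/8))|$ over all Svetlichny operators $\mathcal{S}$ equals $4p$. In particular $\rho_\chi(p,\pi/8)$ does not violate the Svetlichny inequality for any $p\in[0,1]$.
   Context: $\sigma_1,\sigma_2,\sigma_3$ are the Pauli matrices, $I_2$ the $2\times2$ identity. For real unit vectors $\vec a,\vec a',\vec b,\vec b',\vec c,\vec c'\in\mathbb{R}^3$ let $A=\vec a\cdot\vec\sigma=\sum_k a_k\sigma_k$, and similarly $A',B,B',C,C'$. The Svetlichny operator is $$\mathcal{S}=A\otimes[(B+B')\otimes C+(B-B')\otimes C']+A'\otimes[(B-B')\otimes C-(B+B')\otimes C'],$$ and maxima are over all choices of the six unit vectors. A state violates the Svetlichny inequality if $|\mathrm{tr}(\mathcal{S}\rho)|>4$ for some such choice. *)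

theory Defs
  imports "Jordan_Normal_Form.Jordan_Normal_Form" "Jordan_Normal_Form.Schur_Decomposition"
begin

definition mtrace :: "'a::comm_ring_1 mat \<Rightarrow> 'a" where
  "mtrace A = (\<Sum>i<dim_row A. A $$ (i, i))"

(* Kronecker (tensor) product; index i of A \<otimes> B corresponds to (i div dim B, i mod dim B),
   i.e. the standard ordering |abc> = index 4a+2b+c *)
definition kron :: "'a::times mat \<Rightarrow> 'a mat \<Rightarrow> 'a mat" where
  "kron A B = mat (dim_row A * dim_row B) (dim_col A * dim_col B)
     (\<lambda>(i, j). A $$ (i div dim_row B, j div dim_col B) * B $$ (i mod dim_row B, j mod dim_col B))"

(* Pauli matrices: pauli 0 = \<sigma>_1, pauli 1 = \<sigma>_2, pauli 2 = \<sigma>_3 *)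
definition pauli :: "nat \<Rightarrow> complex mat" where
  "pauli k = (if k = 0 then mat_of_rows_list 2 [[0, 1], [1, 0]]
              else if k = 1 then mat_of_rows_list 2 [[0, -\<i>], [\<i>, 0]]
              else mat_of_rows_list 2 [[1, 0], [0, -1]])"

definition unit3 :: "real vec \<Rightarrow> bool" where
  "unit3 a \<longleftrightarrow> dim_vec a = 3 \<and> a \<bullet> a = 1"

definition sdot :: "real vec \<Rightarrow> complex mat" where
  "sdot a = complex_of_real (a $ 0) \<cdot>\<^sub>m pauli 0 + complex_of_real (a $ 1) \<cdot>\<^sub>m pauli 1
           + complex_of_real (a $ 2) \<cdot>\<^sub>m pauli 2"

definition svetlichny ::
  "real vec \<Rightarrow> real vec \<Rightarrow> real vec \<Rightarrow> real vec \<Rightarrow> real vec \<Rightarrow> real vec \<Rightarrow> complex mat" where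
  "svetlichny a a' b b' c c' =
    (let A = sdot a; A' = sdot a'; B = sdot b; B' = sdot b'; C = sdot c; C' = sdot c' in
      kron A (kron (B + B') C + kron (B - B') C')
    + kron A' (kron (B - B') C - kron (B + B') C'))"

definition svet_values :: "complex mat \<Rightarrow> real set" where
  "svet_values \<rho> = {cmod (mtrace (svetlichny a a' b b' c c' * \<rho>)) | a a' b b' c c'.
      unit3 a \<and> unit3 a' \<and> unit3 b \<and> unit3 b' \<and> unit3 c \<and> unit3 c'}"

definition ket0 :: "complex mat" where "ket0 = mat_of_cols_list 2 [[1, 0]]"
definition ket1 :: "complex mat" where "ket1 = mat_of_cols_list 2 [[0, 1]]"

definition psi_s :: "complex mat" where
  "psi_s = complex_of_real (cos (pi / 8)) \<cdot>\<^sub>m kron ket0 (kron ket0 ket0)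
         + complex_of_real (sin (pi / 8)) \<cdot>\<^sub>m kron ket1 (kron ket1 ket1)"

definition rho_chi :: "real \<Rightarrow> complex mat" where
  "rho_chi p = complex_of_real p \<cdot>\<^sub>m (psi_s * mat_adjoint psi_s)
     + complex_of_real (1 - p) \<cdot>\<^sub>m
         kron (kron ket0 ket0 * mat_adjoint (kron ket0 ket0)) ((1 / 2) \<cdot>\<^sub>m 1\<^sub>m 2)"

(* the 3x9 correlation matrix M_{j,ik} = tr[\<rho> (\<sigma>_i \<otimes> \<sigma>_j \<otimes> \<sigma>_k)];
   row j, column 3*i+k (the trace is real since \<rho> and the Pauli products are Hermitian) *)
definition corr_mat :: "complex mat \<Rightarrow> real mat" where
  "corr_mat \<rho> = mat 3 9 (\<lambda>(j, c).
      Re (mtrace (\<rho> * kron (pauli (c div 3)) (kron (pauli j) (pauli (c mod 3))))))"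

(* singular values (with multiplicity) of an m x n real matrix with m \<le> n:
   the nonnegative numbers whose squares are the eigenvalues of M M^T, counted with
   algebraic multiplicity *)
definition singular_values :: "real mat \<Rightarrow> real list \<Rightarrow> bool" where
  "singular_values M ss \<longleftrightarrow> length ss = dim_row M \<and> (\<forall>s\<in>set ss. 0 \<le> s) \<and>
     char_poly (M * transpose_mat M) = (\<Prod>s\<leftarrow>ss. [:- (s ^ 2), 1:])"

end

theory Submission
  imports Defs
begin

text \<open>
  The state \<open>\<rho>_\<chi>\<close> is supported on \<open>|000\<rangle>, |001\<rangle>, |111\<rangle>\<close>, so \<open>tr(\<rho>_\<chi> A\<otimes>B\<otimes>C)\<close> only sees
  the diagonal entries of \<open>A\<otimes>B\<otimes>C\<close> there and the coherence between \<open>|000\<rangle>\<close> and \<open>|111\<rangle>\<close>.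
  Using \<open>cos\<^sup>2(\<pi>/8) - sin\<^sup>2(\<pi>/8) = 2 cos(\<pi>/8) sin(\<pi>/8) = \<surd>2/2\<close> this gives
  \<open>tr(\<rho>_\<chi> A\<otimes>B\<otimes>C) = (\<surd>2/2) p E(a,b,c)\<close> with
  \<open>E(a,b,c) = a\<^sub>z b\<^sub>z c\<^sub>z + Re((a\<^sub>x + i a\<^sub>y)(b\<^sub>x + i b\<^sub>y)(c\<^sub>x + i c\<^sub>y))\<close>.
  The correlation matrix of \<open>E\<close> has orthogonal rows of squared lengths \<open>2, 2, 1\<close>, which yields the
  singular values. Grouping the Svetlichny combination of \<open>E\<close> by \<open>b\<close> and \<open>b'\<close> writes it as
  \<open>b\<cdot>v + b'\<cdot>w\<close> with \<open>|v|\<^sup>2 + |w|\<^sup>2 \<le> 16\<close>, so it is at most \<open>4\<surd>2\<close> by Cauchy-Schwarz, and this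
  value is attained by explicit settings in the \<open>xy\<close>-plane.
\<close>

lemma dim_kron [simp]:
  "dim_row (kron A B) = dim_row A * dim_row B" "dim_col (kron A B) = dim_col A * dim_col B"
  by (simp_all add: kron_def)

lemma index_kron [simp]:
  "i < dim_row A * dim_row B \<Longrightarrow> j < dim_col A * dim_col B \<Longrightarrow>
   kron A B $$ (i, j) = A $$ (i div dim_row B, j div dim_col B) * B $$ (i mod dim_row B, j mod dim_col B)"
  by (simp add: kron_def)

lemma dim_mat_adjoint [simp]:
  "dim_row (mat_adjoint A) = dim_col A" "dim_col (mat_adjoint A) = dim_row A"
  by (simp_all add: mat_adjoint_def)

lemma index_mat_adjoint [simp]:
  "i < dim_col A \<Longrightarrow> j < dim_row A \<Longrightarrow> mat_adjoint A $$ (i, j) = cnj (A $$ (j, i))"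
  by (simp add: mat_adjoint_def mat_of_rows_index)

lemma mtrace_mult_comm:
  assumes "A \<in> carrier_mat n m" "B \<in> carrier_mat m n"
  shows "mtrace (A * B) = mtrace (B * A)"
proof -
  have "mtrace (A * B) = (\<Sum>i<n. \<Sum>k<m. A $$ (i, k) * B $$ (k, i))"
    using assms by (simp add: mtrace_def scalar_prod_def atLeast0LessThan)
  also have "\<dots> = (\<Sum>k<m. \<Sum>i<n. B $$ (k, i) * A $$ (i, k))"
    by (subst sum.swap) (simp add: mult.commute)
  also have "\<dots> = mtrace (B * A)"
    using assms by (simp add: mtrace_def scalar_prod_def atLeast0LessThan)
  finally show ?thesis .
qed

lemma upper_triangular_mat_diag: "upper_triangular (mat_diag n f)"
  by (simp add: upper_triangular_def mat_diag_def)

lemma diag_mat_mat_diag: "diag_mat (mat_diag n f) = map f [0..<n]"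
  by (simp add: diag_mat_def mat_diag_def)

lemma ket0 [simp]:
  "dim_row ket0 = 2" "dim_col ket0 = 1" "ket0 $$ (0, 0) = 1" "ket0 $$ (Suc 0, 0) = 0"
  by (simp_all add: ket0_def mat_of_cols_list_def)

lemma ket1 [simp]:
  "dim_row ket1 = 2" "dim_col ket1 = 1" "ket1 $$ (0, 0) = 0" "ket1 $$ (Suc 0, 0) = 1"
  by (simp_all add: ket1_def mat_of_cols_list_def)

lemma dim_pauli [simp]: "dim_row (pauli k) = 2" "dim_col (pauli k) = 2"
  by (simp_all add: pauli_def mat_of_rows_list_def)

lemma pauli_carrier [simp]: "pauli k \<in> carrier_mat 2 2"
  by (rule carrier_matI) simp_all

lemma pauli_traceless: "pauli k $$ (1, 1) = - pauli k $$ (0, 0)"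
  by (simp add: pauli_def mat_of_rows_list_def)

text \<open>Entries are indexed by \<open>Suc 0\<close> rather than \<open>1\<close>: that is the form the simplifier leaves
  index positions in, so rules stated with \<open>1\<close> would not fire.\<close>

lemma index_pauli [simp]:
  "k < 3 \<Longrightarrow> pauli k $$ (0, 0) = (if k = 2 then 1 else 0)"
  "k < 3 \<Longrightarrow> pauli k $$ (Suc 0, Suc 0) = (if k = 2 then -1 else 0)"
  "k < 3 \<Longrightarrow> pauli k $$ (0, Suc 0) = (if k = 0 then 1 else if k = 1 then -\<i> else 0)"
  "k < 3 \<Longrightarrow> pauli k $$ (Suc 0, 0) = (if k = 0 then 1 else if k = 1 then \<i> else 0)"
  by (auto simp: pauli_def mat_of_rows_list_def)

lemma dim_sdot [simp]: "dim_row (sdot a) = 2" "dim_col (sdot a) = 2"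
  by (simp_all add: sdot_def)

lemma index_sdot [simp]:
  "sdot a $$ (0, 0) = complex_of_real (a $ 2)"
  "sdot a $$ (0, Suc 0) = complex_of_real (a $ 0) - \<i> * complex_of_real (a $ 1)"
  "sdot a $$ (Suc 0, 0) = complex_of_real (a $ 0) + \<i> * complex_of_real (a $ 1)"
  "sdot a $$ (Suc 0, Suc 0) = - complex_of_real (a $ 2)"
  by (simp_all add: sdot_def pauli_def mat_of_rows_list_def)

lemma sum_lessThan_3: "(\<Sum>i<(3::nat). f i) = f 0 + f 1 + f 2"
  by (simp add: eval_nat_numeral lessThan_Suc add_ac)

lemma sum_lessThan_9:
  "(\<Sum>i<(9::nat). f i) = f 0 + f 1 + f 2 + f 3 + f 4 + f 5 + f 6 + f 7 + f 8"
  by (simp add: eval_nat_numeral lessThan_Suc add_ac)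

lemma unit3_sum_sq: "unit3 a \<Longrightarrow> (\<Sum>i<3. (a $ i)\<^sup>2) = 1"
  by (auto simp: unit3_def scalar_prod_def atLeast0LessThan power2_eq_square)

lemma cos_sq_minus_sin_sq_pi_8: "(cos (pi / 8))\<^sup>2 - (sin (pi / 8))\<^sup>2 = sqrt 2 / 2"
  using cos_double[of "pi / 8"] cos_45 by simp

lemma cos_mult_sin_pi_8: "cos (pi / 8) * sin (pi / 8) = sqrt 2 / 4"
  using sin_double[of "pi / 8"] sin_45 by (simp add: mult.commute)

subsection \<open>The state\<close>

definition rho_chi_entry :: "real \<Rightarrow> nat \<Rightarrow> nat \<Rightarrow> complex" where
  "rho_chi_entry p i j =
     (if i = 0 \<and> j = 0 then complex_of_real (p * (cos (pi / 8))\<^sup>2 + (1 - p) / 2)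
      else if i = 1 \<and> j = 1 then complex_of_real ((1 - p) / 2)
      else if (i = 0 \<and> j = 7) \<or> (i = 7 \<and> j = 0) then complex_of_real (p * cos (pi / 8) * sin (pi / 8))
      else if i = 7 \<and> j = 7 then complex_of_real (p * (sin (pi / 8))\<^sup>2)
      else 0)"

lemma dim_psi_s [simp]: "dim_row psi_s = 8" "dim_col psi_s = 1"
  by (simp_all add: psi_s_def)

lemma index_psi_s:
  assumes "i < 8"
  shows "psi_s $$ (i, 0) = (if i = 0 then complex_of_real (cos (pi / 8))
                            else if i = 7 then complex_of_real (sin (pi / 8)) else 0)"
proof -
  from assms consider "i = 0" | "i = 1" | "i = 2" | "i = 3" | "i = 4" | "i = 5" | "i = 6" | "i = 7"
    by linarith
  then show ?thesis
    by cases (simp_all add: psi_s_def)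
qed

lemma dim_rho_chi [simp]: "dim_row (rho_chi p) = 8" "dim_col (rho_chi p) = 8"
  by (simp_all add: rho_chi_def mat_adjoint_def)

lemma index_rho_chi:
  assumes "i < 8" "j < 8"
  shows "rho_chi p $$ (i, j) = rho_chi_entry p i j"
proof -
  from assms(1) consider "i = 0" | "i = 1" | "i = 2" | "i = 3" | "i = 4" | "i = 5" | "i = 6" | "i = 7"
    by linarith
  note row_cases = this
  from assms(2) consider "j = 0" | "j = 1" | "j = 2" | "j = 3" | "j = 4" | "j = 5" | "j = 6" | "j = 7"
    by linarith
  note col_cases = this
  show ?thesis
    by (rule row_cases; rule col_cases;
        simp add: rho_chi_def rho_chi_entry_def index_psi_s scalar_prod_def power2_eq_square)
qed

lemma rho_chi_entry_diagonal:
  "rho_chi_entry p 0 0 - rho_chi_entry p 1 1 - rho_chi_entry p 7 7 = complex_of_real (sqrt 2 / 2 * p)"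
proof -
  have "rho_chi_entry p 0 0 - rho_chi_entry p 1 1 - rho_chi_entry p 7 7 =
          complex_of_real (p * (cos (pi / 8))\<^sup>2 + (1 - p) / 2 - (1 - p) / 2 - p * (sin (pi / 8))\<^sup>2)"
    by (simp add: rho_chi_entry_def)
  also have "p * (cos (pi / 8))\<^sup>2 + (1 - p) / 2 - (1 - p) / 2 - p * (sin (pi / 8))\<^sup>2
               = p * ((cos (pi / 8))\<^sup>2 - (sin (pi / 8))\<^sup>2)"
    by (simp add: algebra_simps)
  also have "\<dots> = sqrt 2 / 2 * p"
    by (simp add: cos_sq_minus_sin_sq_pi_8)
  finally show ?thesis .
qed

lemma rho_chi_entry_coherence: "rho_chi_entry p 0 7 = complex_of_real (sqrt 2 / 4 * p)"
proof -
  have "rho_chi_entry p 0 7 = complex_of_real (p * cos (pi / 8) * sin (pi / 8))"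
    by (simp add: rho_chi_entry_def)
  also have "p * cos (pi / 8) * sin (pi / 8) = sqrt 2 / 4 * p"
    using cos_mult_sin_pi_8 by (metis mult.assoc mult.commute)
  finally show ?thesis .
qed

lemma mtrace_rho_chi_mult:
  assumes "X \<in> carrier_mat 8 8" "X $$ (1, 1) = - X $$ (0, 0)" "X $$ (7, 7) = - X $$ (0, 0)"
  shows "mtrace (rho_chi p * X) =
           complex_of_real (sqrt 2 / 2 * p) * X $$ (0, 0)
         + complex_of_real (sqrt 2 / 4 * p) * (X $$ (0, 7) + X $$ (7, 0))"
proof -
  let ?e = "rho_chi_entry p"
  have "mtrace (rho_chi p * X) =
          X $$ (0, 0) * ?e 0 0 + X $$ (1, 1) * ?e 1 1 + (X $$ (0, 7) + X $$ (7, 0)) * ?e 0 7 + X $$ (7, 7) * ?e 7 7"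
    using assms(1)
    by (simp add: mtrace_def scalar_prod_def atLeast0LessThan lessThan_Suc eval_nat_numeral
                  index_rho_chi rho_chi_entry_def algebra_simps)
  also have "\<dots> = X $$ (0, 0) * (?e 0 0 - ?e 1 1 - ?e 7 7) + (X $$ (0, 7) + X $$ (7, 0)) * ?e 0 7"
    using assms(2,3) by (simp add: algebra_simps)
  finally show ?thesis
    by (simp only: rho_chi_entry_diagonal rho_chi_entry_coherence mult.commute)
qed

lemma mtrace_rho_chi_mult_kron:
  assumes "A \<in> carrier_mat 2 2" "B \<in> carrier_mat 2 2" "C \<in> carrier_mat 2 2"
    and "A $$ (1, 1) = - A $$ (0, 0)" "B $$ (1, 1) = - B $$ (0, 0)" "C $$ (1, 1) = - C $$ (0, 0)"
  shows "mtrace (rho_chi p * kron A (kron B C)) =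
           complex_of_real (sqrt 2 / 2 * p) * (A $$ (0, 0) * B $$ (0, 0) * C $$ (0, 0))
         + complex_of_real (sqrt 2 / 4 * p) *
             (A $$ (0, 1) * B $$ (0, 1) * C $$ (0, 1) + A $$ (1, 0) * B $$ (1, 0) * C $$ (1, 0))"
proof -
  let ?X = "kron A (kron B C)"
  have dims: "dim_row A = 2" "dim_col A = 2" "dim_row B = 2" "dim_col B = 2" "dim_row C = 2" "dim_col C = 2"
    using assms(1-3) by auto
  have "?X \<in> carrier_mat 8 8"
    by (rule carrier_matI) (simp_all add: dims)
  moreover have "?X $$ (0, 0) = A $$ (0, 0) * B $$ (0, 0) * C $$ (0, 0)"
    "?X $$ (1, 1) = - (A $$ (0, 0) * B $$ (0, 0) * C $$ (0, 0))"
    "?X $$ (7, 7) = - (A $$ (0, 0) * B $$ (0, 0) * C $$ (0, 0))"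
    "?X $$ (0, 7) = A $$ (0, 1) * B $$ (0, 1) * C $$ (0, 1)"
    "?X $$ (7, 0) = A $$ (1, 0) * B $$ (1, 0) * C $$ (1, 0)"
    using assms(4-6) by (simp_all add: dims)
  ultimately show ?thesis
    by (simp add: mtrace_rho_chi_mult)
qed

subsection \<open>The correlation matrix\<close>

definition corr_mat_chi :: "real \<Rightarrow> real mat" where
  "corr_mat_chi p = mat 3 9 (\<lambda>(j, c).
     if j = 0 \<and> c = 0 then sqrt 2 / 2 * p
     else if j = 0 \<and> c = 4 then - (sqrt 2 / 2 * p)
     else if j = 1 \<and> (c = 1 \<or> c = 3) then - (sqrt 2 / 2 * p)
     else if j = 2 \<and> c = 8 then sqrt 2 / 2 * p
     else 0)"

lemma corr_mat_rho_chi: "corr_mat (rho_chi p) = corr_mat_chi p"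
proof (rule eq_matI)
  fix j c
  assume "j < dim_row (corr_mat_chi p)" "c < dim_col (corr_mat_chi p)"
  then have jc: "j < 3" "c < 9"
    by (auto simp: corr_mat_chi_def)
  from jc(1) consider "j = 0" | "j = 1" | "j = 2"
    by linarith
  note row_cases = this
  from jc(2) consider "c = 0" | "c = 1" | "c = 2" | "c = 3" | "c = 4" | "c = 5" | "c = 6" | "c = 7" | "c = 8"
    by linarith
  note col_cases = this
  have "corr_mat (rho_chi p) $$ (j, c) =
          Re (mtrace (rho_chi p * kron (pauli (c div 3)) (kron (pauli j) (pauli (c mod 3)))))"
    using jc by (simp add: corr_mat_def)
  also have "\<dots> = corr_mat_chi p $$ (j, c)"
    unfolding mtrace_rho_chi_mult_kron[OF pauli_carrier pauli_carrier pauli_carrier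
                                         pauli_traceless pauli_traceless pauli_traceless]
    by (rule row_cases; rule col_cases; simp add: corr_mat_chi_def)
  finally show "corr_mat (rho_chi p) $$ (j, c) = corr_mat_chi p $$ (j, c)" .
qed (auto simp: corr_mat_def corr_mat_chi_def)

lemma corr_mat_chi_gram:
  "corr_mat_chi p * transpose_mat (corr_mat_chi p) = mat_diag 3 (\<lambda>i. if i = 2 then p\<^sup>2 / 2 else p\<^sup>2)"
proof (rule eq_matI)
  fix i j
  assume "i < dim_row (mat_diag 3 (\<lambda>i. if i = 2 then p\<^sup>2 / 2 else p\<^sup>2))"
    "j < dim_col (mat_diag 3 (\<lambda>i. if i = 2 then p\<^sup>2 / 2 else p\<^sup>2))"
  then have ij: "i < 3" "j < 3"
    by (auto simp: mat_diag_def)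
  from ij(1) consider "i = 0" | "i = 1" | "i = 2"
    by linarith
  note row_cases = this
  from ij(2) consider "j = 0" | "j = 1" | "j = 2"
    by linarith
  note col_cases = this
  show "(corr_mat_chi p * transpose_mat (corr_mat_chi p)) $$ (i, j) =
          mat_diag 3 (\<lambda>i. if i = 2 then p\<^sup>2 / 2 else p\<^sup>2) $$ (i, j)"
    by (rule row_cases; rule col_cases;
        simp add: corr_mat_chi_def mat_diag_def scalar_prod_def atLeast0LessThan sum_lessThan_9
                  power2_eq_square)
qed (auto simp: corr_mat_chi_def mat_diag_def)

lemma singular_values_corr_mat_rho_chi:
  assumes "0 \<le> p"
  shows "singular_values (corr_mat (rho_chi p)) [p, p, sqrt 2 / 2 * p]"
proof -
  have half_sq: "(sqrt 2 * p / 2)\<^sup>2 = p\<^sup>2 / 2"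
    by (simp add: power_mult_distrib power_divide)
  show ?thesis
    unfolding singular_values_def corr_mat_rho_chi corr_mat_chi_gram
      char_poly_upper_triangular[OF mat_diag_dim upper_triangular_mat_diag] diag_mat_mat_diag
    using assms by (simp add: upt_rec corr_mat_chi_def half_sq)
qed

subsection \<open>The Svetlichny value\<close>

definition svet_comb ::
  "(real vec \<Rightarrow> real vec \<Rightarrow> real vec \<Rightarrow> real) \<Rightarrow>
   real vec \<Rightarrow> real vec \<Rightarrow> real vec \<Rightarrow> real vec \<Rightarrow> real vec \<Rightarrow> real vec \<Rightarrow> real" where
  "svet_comb E a a' b b' c c' =
     E a b c + E a b' c + E a b c' - E a b' c' + E a' b c - E a' b' c - E a' b c' - E a' b' c'"

text \<open>\<open>chi_corr a b c = a\<^sub>z b\<^sub>z c\<^sub>z + Re((a\<^sub>x + i a\<^sub>y)(b\<^sub>x + i b\<^sub>y)(c\<^sub>x + i c\<^sub>y))\<close>,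
  with components \<open>x, y, z\<close> at indices \<open>0, 1, 2\<close>.\<close>

definition chi_corr :: "real vec \<Rightarrow> real vec \<Rightarrow> real vec \<Rightarrow> real" where
  "chi_corr a b c = a $ 2 * b $ 2 * c $ 2
     + (a $ 0 * b $ 0 * c $ 0 - a $ 0 * b $ 1 * c $ 1 - a $ 1 * b $ 0 * c $ 1 - a $ 1 * b $ 1 * c $ 0)"

lemma svet_comb_chi_corr:
  "svet_comb chi_corr a a' b b' c c' =
     svet_comb (\<lambda>x y z. x $ 2 * y $ 2 * z $ 2) a a' b b' c c'
   + svet_comb (\<lambda>x y z. x $ 0 * y $ 0 * z $ 0 - x $ 0 * y $ 1 * z $ 1
                        - x $ 1 * y $ 0 * z $ 1 - x $ 1 * y $ 1 * z $ 0) a a' b b' c c'"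
  by (simp add: svet_comb_def chi_corr_def)

lemma dim_svetlichny [simp]:
  "dim_row (svetlichny a a' b b' c c') = 8" "dim_col (svetlichny a a' b b' c c') = 8"
  by (simp_all add: svetlichny_def Let_def)

lemma svetlichny_diagonal:
  "svetlichny a a' b b' c c' $$ (0, 0) = complex_of_real (svet_comb (\<lambda>x y z. x $ 2 * y $ 2 * z $ 2) a a' b b' c c')"
  "svetlichny a a' b b' c c' $$ (1, 1) = - svetlichny a a' b b' c c' $$ (0, 0)"
  "svetlichny a a' b b' c c' $$ (7, 7) = - svetlichny a a' b b' c c' $$ (0, 0)"
  by (simp_all add: svetlichny_def Let_def svet_comb_def algebra_simps)

lemma svetlichny_coherence:
  "svetlichny a a' b b' c c' $$ (0, 7) + svetlichny a a' b b' c c' $$ (7, 0) =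
     complex_of_real (2 * svet_comb (\<lambda>x y z. x $ 0 * y $ 0 * z $ 0 - x $ 0 * y $ 1 * z $ 1
                                             - x $ 1 * y $ 0 * z $ 1 - x $ 1 * y $ 1 * z $ 0)
                                    a a' b b' c c')"
  by (simp add: svetlichny_def Let_def svet_comb_def complex_eq_iff algebra_simps)

lemma mtrace_svetlichny_rho_chi:
  "mtrace (svetlichny a a' b b' c c' * rho_chi p) =
     complex_of_real (sqrt 2 / 2 * p * svet_comb chi_corr a a' b b' c c')"
proof -
  let ?S = "svetlichny a a' b b' c c'"
  have carrier: "?S \<in> carrier_mat 8 8"
    by (rule carrier_matI) simp_all
  have "mtrace (?S * rho_chi p) = mtrace (rho_chi p * ?S)"
    using carrier by (rule mtrace_mult_comm) (rule carrier_matI; simp)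
  also have "\<dots> = complex_of_real (sqrt 2 / 2 * p) * ?S $$ (0, 0)
                 + complex_of_real (sqrt 2 / 4 * p) * (?S $$ (0, 7) + ?S $$ (7, 0))"
    using carrier svetlichny_diagonal(2,3) by (rule mtrace_rho_chi_mult)
  finally show ?thesis
    unfolding svet_comb_chi_corr svetlichny_diagonal(1) svetlichny_coherence
    by (simp only: of_real_mult[symmetric] of_real_add[symmetric]) (simp add: algebra_simps)
qed

lemma cmod_mtrace_svetlichny_rho_chi:
  "cmod (mtrace (svetlichny a a' b b' c c' * rho_chi p)) =
     sqrt 2 / 2 * \<bar>p\<bar> * \<bar>svet_comb chi_corr a a' b b' c c'\<bar>"
  by (simp only: mtrace_svetlichny_rho_chi norm_of_real) (simp add: abs_mult)

lemma abs_dot3_le: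
  fixes b0 b1 b2 v0 v1 v2 :: real
  assumes "b0\<^sup>2 + b1\<^sup>2 + b2\<^sup>2 = 1"
  shows "\<bar>b0 * v0 + b1 * v1 + b2 * v2\<bar> \<le> sqrt (v0\<^sup>2 + v1\<^sup>2 + v2\<^sup>2)"
proof -
  have "(b0\<^sup>2 + b1\<^sup>2 + b2\<^sup>2) * (v0\<^sup>2 + v1\<^sup>2 + v2\<^sup>2) - (b0 * v0 + b1 * v1 + b2 * v2)\<^sup>2
          = (b0 * v1 - b1 * v0)\<^sup>2 + (b0 * v2 - b2 * v0)\<^sup>2 + (b1 * v2 - b2 * v1)\<^sup>2"
    by (simp add: power2_eq_square algebra_simps)
  then have "v0\<^sup>2 + v1\<^sup>2 + v2\<^sup>2 - (b0 * v0 + b1 * v1 + b2 * v2)\<^sup>2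
               = (b0 * v1 - b1 * v0)\<^sup>2 + (b0 * v2 - b2 * v0)\<^sup>2 + (b1 * v2 - b2 * v1)\<^sup>2"
    using assms by simp
  moreover have "0 \<le> (b0 * v1 - b1 * v0)\<^sup>2 + (b0 * v2 - b2 * v0)\<^sup>2 + (b1 * v2 - b2 * v1)\<^sup>2"
    by simp
  ultimately have "(b0 * v0 + b1 * v1 + b2 * v2)\<^sup>2 \<le> v0\<^sup>2 + v1\<^sup>2 + v2\<^sup>2"
    by linarith
  then show ?thesis
    by (metis real_sqrt_abs real_sqrt_le_mono)
qed

lemma add_le_sqrt2_mult_of_sum_sq_le:
  fixes x y s :: real
  assumes "x\<^sup>2 + y\<^sup>2 \<le> s\<^sup>2" "0 \<le> s"
  shows "x + y \<le> sqrt 2 * s"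
proof -
  have "(x + y)\<^sup>2 \<le> 2 * (x\<^sup>2 + y\<^sup>2)"
    using sum_squares_ge_zero[of "x - y" 0] by (simp add: power2_eq_square algebra_simps)
  also have "\<dots> \<le> (sqrt 2 * s)\<^sup>2"
    using assms(1) by (simp add: power_mult_distrib)
  finally show ?thesis
    by (rule power2_le_imp_le) (simp add: assms(2))
qed

lemma sum_sq_mixed_products:
  fixes a a' c c' :: "nat \<Rightarrow> real"
  shows "(\<Sum>i<n. \<Sum>k<m. (a i * (c k + c' k) + a' i * (c k - c' k))\<^sup>2
                       + (a i * (c k - c' k) - a' i * (c k + c' k))\<^sup>2)
       = 2 * (\<Sum>i<n. (a i)\<^sup>2 + (a' i)\<^sup>2) * (\<Sum>k<m. (c k)\<^sup>2 + (c' k)\<^sup>2)"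
proof -
  have pointwise: "(a i * (c k + c' k) + a' i * (c k - c' k))\<^sup>2 + (a i * (c k - c' k) - a' i * (c k + c' k))\<^sup>2
      = 2 * ((a i)\<^sup>2 + (a' i)\<^sup>2) * ((c k)\<^sup>2 + (c' k)\<^sup>2)" for i k
    by (simp add: power2_eq_square algebra_simps)
  have "2 * (\<Sum>i<n. (a i)\<^sup>2 + (a' i)\<^sup>2) * (\<Sum>k<m. (c k)\<^sup>2 + (c' k)\<^sup>2)
      = (\<Sum>i<n. \<Sum>k<m. 2 * ((a i)\<^sup>2 + (a' i)\<^sup>2) * ((c k)\<^sup>2 + (c' k)\<^sup>2))"
    unfolding sum_distrib_left[of 2] sum_product ..
  then show ?thesis
    by (simp only: pointwise)
qed

text \<open>The vector \<open>v\<close> paired with \<open>b\<close> (or \<open>b'\<close>) in the Svetlichny combination of \<open>chi_corr\<close>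
  is a contraction of the \<open>3\<times>3\<close> array \<open>X\<close>; this bounds its length by the Frobenius norm of \<open>X\<close>.\<close>

lemma sq_contraction_le:
  fixes x00 x01 x02 x10 x11 x12 x20 x21 x22 :: real
  shows "(x00 - x11)\<^sup>2 + (x01 + x10)\<^sup>2 + x22\<^sup>2
           \<le> 2 * (x00\<^sup>2 + x01\<^sup>2 + x02\<^sup>2 + x10\<^sup>2 + x11\<^sup>2 + x12\<^sup>2 + x20\<^sup>2 + x21\<^sup>2 + x22\<^sup>2)"
proof -
  have "2 * (x00\<^sup>2 + x01\<^sup>2 + x02\<^sup>2 + x10\<^sup>2 + x11\<^sup>2 + x12\<^sup>2 + x20\<^sup>2 + x21\<^sup>2 + x22\<^sup>2)
          - ((x00 - x11)\<^sup>2 + (x01 + x10)\<^sup>2 + x22\<^sup>2)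
        = (x00 + x11)\<^sup>2 + (x01 - x10)\<^sup>2 + x22\<^sup>2 + 2 * (x02\<^sup>2 + x12\<^sup>2 + x20\<^sup>2 + x21\<^sup>2)"
    by (simp add: power2_eq_square algebra_simps)
  moreover have "0 \<le> (x00 + x11)\<^sup>2 + (x01 - x10)\<^sup>2 + x22\<^sup>2 + 2 * (x02\<^sup>2 + x12\<^sup>2 + x20\<^sup>2 + x21\<^sup>2)"
    by simp
  ultimately show ?thesis
    by linarith
qed

lemma abs_svet_comb_chi_corr_le:
  assumes "unit3 a" "unit3 a'" "unit3 b" "unit3 b'" "unit3 c" "unit3 c'"
  shows "\<bar>svet_comb chi_corr a a' b b' c c'\<bar> \<le> 4 * sqrt 2"
proof -
  define X where "X i k = a $ i * (c $ k + c' $ k) + a' $ i * (c $ k - c' $ k)" for i k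
  define Y where "Y i k = a $ i * (c $ k - c' $ k) - a' $ i * (c $ k + c' $ k)" for i k
  define nv where "nv = sqrt ((X 0 0 - X 1 1)\<^sup>2 + (X 0 1 + X 1 0)\<^sup>2 + (X 2 2)\<^sup>2)"
  define nw where "nw = sqrt ((Y 0 0 - Y 1 1)\<^sup>2 + (Y 0 1 + Y 1 0)\<^sup>2 + (Y 2 2)\<^sup>2)"
  have unit_sq: "(x $ 0)\<^sup>2 + (x $ 1)\<^sup>2 + (x $ 2)\<^sup>2 = 1" if "unit3 x" for x
    using unit3_sum_sq[OF that] by (simp add: sum_lessThan_3)
  have split: "svet_comb chi_corr a a' b b' c c' =
      (b $ 0 * (X 0 0 - X 1 1) + (- b $ 1) * (X 0 1 + X 1 0) + b $ 2 * X 2 2)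
    + (b' $ 0 * (Y 0 0 - Y 1 1) + (- b' $ 1) * (Y 0 1 + Y 1 0) + b' $ 2 * Y 2 2)"
    by (simp add: svet_comb_def chi_corr_def X_def Y_def algebra_simps)
  have "(\<Sum>i<3. \<Sum>k<3. (X i k)\<^sup>2) + (\<Sum>i<3. \<Sum>k<3. (Y i k)\<^sup>2)
          = 2 * (\<Sum>i<3. (a $ i)\<^sup>2 + (a' $ i)\<^sup>2) * (\<Sum>k<3. (c $ k)\<^sup>2 + (c' $ k)\<^sup>2)"
    unfolding X_def Y_def sum.distrib[symmetric]
    by (rule sum_sq_mixed_products[where a = "\<lambda>i. a $ i" and a' = "\<lambda>i. a' $ i"
                                     and c = "\<lambda>k. c $ k" and c' = "\<lambda>k. c' $ k"])
  also have "\<dots> = 8"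
    using assms by (simp add: sum.distrib unit3_sum_sq)
  finally have frobenius: "(\<Sum>i<3. \<Sum>k<3. (X i k)\<^sup>2) + (\<Sum>i<3. \<Sum>k<3. (Y i k)\<^sup>2) = 8" .
  have "nv\<^sup>2 \<le> 2 * (\<Sum>i<3. \<Sum>k<3. (X i k)\<^sup>2)"
    using sq_contraction_le[of "X 0 0" "X 1 1" "X 0 1" "X 1 0" "X 2 2" "X 0 2" "X 1 2" "X 2 0" "X 2 1"]
    by (simp add: nv_def sum_lessThan_3 add_ac)
  moreover have "nw\<^sup>2 \<le> 2 * (\<Sum>i<3. \<Sum>k<3. (Y i k)\<^sup>2)"
    using sq_contraction_le[of "Y 0 0" "Y 1 1" "Y 0 1" "Y 1 0" "Y 2 2" "Y 0 2" "Y 1 2" "Y 2 0" "Y 2 1"]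
    by (simp add: nw_def sum_lessThan_3 add_ac)
  ultimately have "nv\<^sup>2 + nw\<^sup>2 \<le> 4\<^sup>2"
    using frobenius by simp
  then have "nv + nw \<le> 4 * sqrt 2"
    using add_le_sqrt2_mult_of_sum_sq_le[of nv nw 4] by (simp add: mult.commute)
  moreover have "\<bar>b $ 0 * (X 0 0 - X 1 1) + (- b $ 1) * (X 0 1 + X 1 0) + b $ 2 * X 2 2\<bar> \<le> nv"
    unfolding nv_def using unit_sq assms(3) by (intro abs_dot3_le) simp
  moreover have "\<bar>b' $ 0 * (Y 0 0 - Y 1 1) + (- b' $ 1) * (Y 0 1 + Y 1 0) + b' $ 2 * Y 2 2\<bar> \<le> nw"
    unfolding nw_def using unit_sq assms(4) by (intro abs_dot3_le) simp
  ultimately show ?thesis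
    unfolding split by linarith
qed

lemma svet_values_rho_chi_le:
  assumes "0 \<le> p" "v \<in> svet_values (rho_chi p)"
  shows "v \<le> 4 * p"
proof -
  obtain a a' b b' c c' where units: "unit3 a" "unit3 a'" "unit3 b" "unit3 b'" "unit3 c" "unit3 c'"
    and v: "v = sqrt 2 / 2 * p * \<bar>svet_comb chi_corr a a' b b' c c'\<bar>"
    using assms by (auto simp: svet_values_def cmod_mtrace_svetlichny_rho_chi)
  have "v \<le> sqrt 2 / 2 * p * (4 * sqrt 2)"
    unfolding v using assms(1) abs_svet_comb_chi_corr_le[OF units] by (intro mult_left_mono) simp_all
  then show ?thesis
    by simp
qed

definition vec3 :: "real \<Rightarrow> real \<Rightarrow> real \<Rightarrow> real vec" where
  "vec3 x y z = vec 3 (\<lambda>i. if i = 0 then x else if i = 1 then y else z)"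

lemma unit3_vec3: "x\<^sup>2 + y\<^sup>2 + z\<^sup>2 = 1 \<Longrightarrow> unit3 (vec3 x y z)"
  by (simp add: unit3_def vec3_def scalar_prod_def atLeast0LessThan lessThan_Suc eval_nat_numeral
                power2_eq_square add_ac)

lemma four_mult_in_svet_values_rho_chi:
  assumes "0 \<le> p"
  shows "4 * p \<in> svet_values (rho_chi p)"
proof -
  let ?s = "sqrt 2 / 2"
  let ?x = "vec3 1 0 0" and ?y = "vec3 0 1 0" and ?b = "vec3 ?s (- ?s) 0" and ?b' = "vec3 ?s ?s 0"
  have "?s\<^sup>2 = 1 / 2"
    by (simp add: power_divide)
  then have units: "unit3 ?x" "unit3 ?y" "unit3 ?b" "unit3 ?b'"
    by (simp_all add: unit3_vec3)
  have "svet_comb chi_corr ?x ?y ?b ?b' ?x ?y = 4 * sqrt 2"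
    by (simp add: svet_comb_def chi_corr_def vec3_def)
  then have "cmod (mtrace (svetlichny ?x ?y ?b ?b' ?x ?y * rho_chi p)) = 4 * p"
    using assms by (simp add: cmod_mtrace_svetlichny_rho_chi)
  then show ?thesis
    unfolding svet_values_def using units by (blast intro: sym)
qed

theorem mainTheorem2:
  fixes p :: real
  assumes "0 \<le> p" and "p \<le> 1"
  shows "singular_values (corr_mat (rho_chi p)) [p, p, sqrt 2 / 2 * p]
       \<and> (4 * p \<in> svet_values (rho_chi p) \<and> (\<forall>v \<in> svet_values (rho_chi p). v \<le> 4 * p))
       \<and> \<not> (\<exists>v \<in> svet_values (rho_chi p). v > 4)"
proof -
  have le: "\<forall>v \<in> svet_values (rho_chi p). v \<le> 4 * p"
    using svet_values_rho_chi_le[OF assms(1)] by blast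
  then have "\<not> (\<exists>v \<in> svet_values (rho_chi p). v > 4)"
    using assms(2) by force
  then show ?thesis
    using singular_values_corr_mat_rho_chi[OF assms(1)] four_mult_in_svet_values_rho_chi[OF assms(1)] le
    by blast
qed

end
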